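(* The class of $(\circ,\wedge,\mathsf{A})$-algebras that are completely representable by partial functions is closed under (arbitrary) direct products.
   Context: A $(\circ,\wedge,\mathsf{A})$-algebra is a set with two binary operations $\circ,\wedge$ and one unary operation $\mathsf{A}$. An algebra of partial functions of this signature is a set of partial functions, with base $X$ the union of all their domains and ranges, closed under: composition $f\circ g=\{(x,z)\mid \exists y\,(x,y)\in f,(y,z)\in g\}$; intersection; antidomain $\mathsf{A}(f)=\{(x,x)\mid x\in X, x\notin\mathrm{dom}(f)\}$. A representation by partial functions is an isomorphism onto such an algebra. The order is $a\le b\iff a\wedge b=a$. A representation $\theta$ is complete if for every nonempty $S$ with $\bigwedge S$ existing, $\theta(\bigwedge S)=\bigcap\theta[S]$ (equivalently, for every $S$ with $\bigvee S$ existing, $\theta(\bigvee S)=\bigcup\theta[S]$). An algebra is completely representable if it has a complete representation. *)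

theory Defs
  imports Main "HOL-Library.FuncSet"
begin

text \<open>An algebra of signature (composition, meet, antidomain): a carrier set with
  two binary operations and one unary operation (no axioms).\<close>
record 'a cwa =
  carrier :: "'a set"
  comp :: "'a \<Rightarrow> 'a \<Rightarrow> 'a"
  mt :: "'a \<Rightarrow> 'a \<Rightarrow> 'a"
  ad :: "'a \<Rightarrow> 'a"

definition is_cwa :: "'a cwa \<Rightarrow> bool" where
  "is_cwa A \<longleftrightarrow>
     (\<forall>a\<in>carrier A. \<forall>b\<in>carrier A. comp A a b \<in> carrier A \<and> mt A a b \<in> carrier A)
     \<and> (\<forall>a\<in>carrier A. ad A a \<in> carrier A)"

definition cwa_le :: "'a cwa \<Rightarrow> 'a \<Rightarrow> 'a \<Rightarrow> bool" where
  "cwa_le A a b \<longleftrightarrow> mt A a b = a"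

definition is_meet :: "'a cwa \<Rightarrow> 'a set \<Rightarrow> 'a \<Rightarrow> bool" where
  "is_meet A S m \<longleftrightarrow> m \<in> carrier A \<and> (\<forall>s\<in>S. cwa_le A m s)
     \<and> (\<forall>c\<in>carrier A. (\<forall>s\<in>S. cwa_le A c s) \<longrightarrow> cwa_le A c m)"

definition partial_fun :: "('x \<times> 'x) set \<Rightarrow> bool" where
  "partial_fun f \<longleftrightarrow> (\<forall>x y z. (x, y) \<in> f \<longrightarrow> (x, z) \<in> f \<longrightarrow> y = z)"

definition base :: "('x \<times> 'x) set set \<Rightarrow> 'x set" where
  "base F = (\<Union>f\<in>F. Domain f \<union> Range f)"

definition antidom :: "'x set \<Rightarrow> ('x \<times> 'x) set \<Rightarrow> ('x \<times> 'x) set" where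
  "antidom X f = {(x, x) | x. x \<in> X \<and> x \<notin> Domain f}"

definition pf_representation :: "'a cwa \<Rightarrow> ('a \<Rightarrow> ('x \<times> 'x) set) \<Rightarrow> bool" where
  "pf_representation A \<theta> \<longleftrightarrow>
     inj_on \<theta> (carrier A)
     \<and> (\<forall>a\<in>carrier A. partial_fun (\<theta> a))
     \<and> (\<forall>a\<in>carrier A. \<forall>b\<in>carrier A. \<theta> (comp A a b) = \<theta> a O \<theta> b)
     \<and> (\<forall>a\<in>carrier A. \<forall>b\<in>carrier A. \<theta> (mt A a b) = \<theta> a \<inter> \<theta> b)
     \<and> (\<forall>a\<in>carrier A. \<theta> (ad A a) = antidom (base (\<theta> ` carrier A)) (\<theta> a))"

definition complete_representation :: "'a cwa \<Rightarrow> ('a \<Rightarrow> ('x \<times> 'x) set) \<Rightarrow> bool" where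
  "complete_representation A \<theta> \<longleftrightarrow> pf_representation A \<theta>
     \<and> (\<forall>S m. S \<subseteq> carrier A \<and> S \<noteq> {} \<and> is_meet A S m \<longrightarrow> \<theta> m = (\<Inter>s\<in>S. \<theta> s))"

text \<open>Completely representable, with representation base inside the type 'x.\<close>
definition completely_representable :: "'a cwa \<Rightarrow> 'x itself \<Rightarrow> bool" where
  "completely_representable A _ \<longleftrightarrow> (\<exists>\<theta> :: 'a \<Rightarrow> ('x \<times> 'x) set. complete_representation A \<theta>)"

definition direct_product :: "'i set \<Rightarrow> ('i \<Rightarrow> 'a cwa) \<Rightarrow> ('i \<Rightarrow> 'a) cwa" where
  "direct_product I A =
     \<lparr> carrier = (\<Pi>\<^sub>E i\<in>I. carrier (A i)),
       comp = (\<lambda>f g. \<lambda>i\<in>I. comp (A i) (f i) (g i)),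
       mt = (\<lambda>f g. \<lambda>i\<in>I. mt (A i) (f i) (g i)),
       ad = (\<lambda>f. \<lambda>i\<in>I. ad (A i) (f i)) \<rparr>"

end

theory Submission
  imports Defs
begin

(* Given complete representations th i of the factors A i over bases X i, the
   product is represented over the disjoint union of the bases: an element f
   of the product acts on the summand {i} \<times> X i as th i (f i) does on X i. *)

definition sum_rel :: "'i set \<Rightarrow> ('i \<Rightarrow> ('x \<times> 'x) set) \<Rightarrow> (('i \<times> 'x) \<times> ('i \<times> 'x)) set" where
  "sum_rel I R = {((i, x), (i, y)) | i x y. i \<in> I \<and> (x, y) \<in> R i}"

lemma sum_rel_mem [simp]:
  "((i, x), (j, y)) \<in> sum_rel I R \<longleftrightarrow> i = j \<and> i \<in> I \<and> (x, y) \<in> R i"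
  unfolding sum_rel_def by auto

lemma sum_rel_eq_iff:
  "sum_rel I R = sum_rel I S \<longleftrightarrow> (\<forall>i\<in>I. R i = S i)"
proof
  assume eq: "sum_rel I R = sum_rel I S"
  show "\<forall>i\<in>I. R i = S i"
  proof (intro ballI set_eqI)
    fix i p assume "i \<in> I"
    then show "p \<in> R i \<longleftrightarrow> p \<in> S i"
      using eq[THEN arg_cong[where f = "\<lambda>T. ((i, fst p), (i, snd p)) \<in> T"]] by simp
  qed
qed (auto simp: sum_rel_def)

lemma Domain_sum_rel: "Domain (sum_rel I R) = Sigma I (\<lambda>i. Domain (R i))"
  by (auto simp: sum_rel_def)

lemma Range_sum_rel: "Range (sum_rel I R) = Sigma I (\<lambda>i. Range (R i))"
  by (auto simp: sum_rel_def)

lemma sum_rel_relcomp: "sum_rel I R O sum_rel I S = sum_rel I (\<lambda>i. R i O S i)"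
  by (auto simp: sum_rel_def)

lemma sum_rel_Int: "sum_rel I R \<inter> sum_rel I S = sum_rel I (\<lambda>i. R i \<inter> S i)"
  by (auto simp: sum_rel_def)

text \<open>Nonemptiness is needed: the empty intersection is the universal relation.\<close>
lemma sum_rel_INT:
  assumes "T \<noteq> {}"
  shows "(\<Inter>t\<in>T. sum_rel I (R t)) = sum_rel I (\<lambda>i. \<Inter>t\<in>T. R t i)"
  using assms by (auto simp: sum_rel_def)

lemma sum_rel_antidom:
  "antidom (Sigma I X) (sum_rel I R) = sum_rel I (\<lambda>i. antidom (X i) (R i))"
  by (auto simp: antidom_def Domain_sum_rel)

lemma partial_fun_sum_rel:
  assumes "\<forall>i\<in>I. partial_fun (R i)"
  shows "partial_fun (sum_rel I R)"
  using assms unfolding partial_fun_def sum_rel_def by blast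

lemma direct_product_simps [simp]:
  "carrier (direct_product I A) = (\<Pi>\<^sub>E i\<in>I. carrier (A i))"
  "comp (direct_product I A) f g = (\<lambda>i\<in>I. comp (A i) (f i) (g i))"
  "mt (direct_product I A) f g = (\<lambda>i\<in>I. mt (A i) (f i) (g i))"
  "ad (direct_product I A) f = (\<lambda>i\<in>I. ad (A i) (f i))"
  by (simp_all add: direct_product_def)

lemma direct_product_is_cwa:
  assumes "\<forall>i\<in>I. is_cwa (A i)"
  shows "is_cwa (direct_product I A)"
  using assms unfolding is_cwa_def by (auto simp: PiE_iff)

lemma cwa_le_direct_product:
  assumes "f \<in> carrier (direct_product I A)"
  shows "cwa_le (direct_product I A) f g \<longleftrightarrow> (\<forall>i\<in>I. cwa_le (A i) (f i) (g i))"
proof -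
  have "f \<in> extensional I" using assms by (simp add: PiE_iff)
  then show ?thesis
    unfolding cwa_le_def by (auto simp: fun_eq_iff restrict_def extensional_def)
qed

text \<open>A meet in the product projects to a meet in each factor: a lower bound c
  in the factor i is lifted to the product by replacing the i-th entry of the meet.\<close>
lemma is_meet_direct_product_component:
  assumes meet: "is_meet (direct_product I A) S m" and i: "i \<in> I"
  shows "is_meet (A i) ((\<lambda>s. s i) ` S) (m i)"
  unfolding is_meet_def
proof (intro conjI ballI impI)
  let ?P = "direct_product I A"
  have m: "m \<in> carrier ?P" and m_lb: "\<forall>s\<in>S. cwa_le ?P m s"
    using meet unfolding is_meet_def by auto
  then show "m i \<in> carrier (A i)" using i by auto
  show "cwa_le (A i) (m i) t" if "t \<in> (\<lambda>s. s i) ` S" for t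
    using that m_lb i cwa_le_direct_product[OF m] by auto
  fix c assume c: "c \<in> carrier (A i)" and c_lb: "\<forall>t\<in>(\<lambda>s. s i) ` S. cwa_le (A i) c t"
  define c' where "c' = m(i := c)"
  have c': "c' \<in> carrier ?P" using m c i by (auto simp: c'_def PiE_iff extensional_def)
  have "cwa_le ?P c' s" if "s \<in> S" for s
    using that c_lb m_lb cwa_le_direct_product[OF m] cwa_le_direct_product[OF c']
    by (auto simp: c'_def)
  then have "cwa_le ?P c' m" using meet c' unfolding is_meet_def by blast
  then show "cwa_le (A i) c (m i)" using i cwa_le_direct_product[OF c'] by (auto simp: c'_def)
qed

definition product_rep :: "'i set \<Rightarrow> ('i \<Rightarrow> 'a \<Rightarrow> ('x \<times> 'x) set) \<Rightarrow> ('i \<Rightarrow> 'a) \<Rightarrow> (('i \<times> 'x) \<times> ('i \<times> 'x)) set" where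
  "product_rep I th f = sum_rel I (\<lambda>i. th i (f i))"

text \<open>The base of the product representation is the disjoint union of the bases of
  the factors, provided the product is nonempty: any element of a factor occurs as
  a component of some element of the product.\<close>
lemma base_product_rep:
  assumes f: "f \<in> (\<Pi>\<^sub>E i\<in>I. carrier (A i))"
  shows "base (product_rep I th ` (\<Pi>\<^sub>E i\<in>I. carrier (A i)))
           = Sigma I (\<lambda>i. base (th i ` carrier (A i)))"
proof
  show "base (product_rep I th ` (\<Pi>\<^sub>E i\<in>I. carrier (A i))) \<subseteq> Sigma I (\<lambda>i. base (th i ` carrier (A i)))"
    by (fastforce simp: base_def product_rep_def Domain_sum_rel Range_sum_rel)
next
  show "Sigma I (\<lambda>i. base (th i ` carrier (A i))) \<subseteq> base (product_rep I th ` (\<Pi>\<^sub>E i\<in>I. carrier (A i)))"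
  proof clarify
    fix i x assume i: "i \<in> I" and "x \<in> base (th i ` carrier (A i))"
    then obtain a where a: "a \<in> carrier (A i)" and x: "x \<in> Domain (th i a) \<union> Range (th i a)"
      unfolding base_def by auto
    have fa: "f(i := a) \<in> (\<Pi>\<^sub>E i\<in>I. carrier (A i))"
      using f a i by (auto simp: PiE_iff extensional_def)
    have "(i, x) \<in> Domain (product_rep I th (f(i := a))) \<union> Range (product_rep I th (f(i := a)))"
      using i x by (simp add: product_rep_def Domain_sum_rel Range_sum_rel)
    then show "(i, x) \<in> base (product_rep I th ` (\<Pi>\<^sub>E i\<in>I. carrier (A i)))"
      using fa unfolding base_def by blast
  qed
qed

lemma pf_representation_product:
  assumes rep: "\<forall>i\<in>I. pf_representation (A i) (th i)"
  shows "pf_representation (direct_product I A) (product_rep I th)"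
  unfolding pf_representation_def
proof (intro conjI ballI)
  let ?P = "direct_product I A"
  have inj: "inj_on (th i) (carrier (A i))"
    and pf: "\<And>a. a \<in> carrier (A i) \<Longrightarrow> partial_fun (th i a)"
    and comp: "\<And>a b. a \<in> carrier (A i) \<Longrightarrow> b \<in> carrier (A i) \<Longrightarrow> th i (comp (A i) a b) = th i a O th i b"
    and mt: "\<And>a b. a \<in> carrier (A i) \<Longrightarrow> b \<in> carrier (A i) \<Longrightarrow> th i (mt (A i) a b) = th i a \<inter> th i b"
    and ad: "\<And>a. a \<in> carrier (A i) \<Longrightarrow> th i (ad (A i) a) = antidom (base (th i ` carrier (A i))) (th i a)"
    if "i \<in> I" for i
    using rep that unfolding pf_representation_def by blast+
  show "inj_on (product_rep I th) (carrier ?P)"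
  proof (rule inj_onI)
    fix f g assume f: "f \<in> carrier ?P" and g: "g \<in> carrier ?P"
      and "product_rep I th f = product_rep I th g"
    then have "\<forall>i\<in>I. th i (f i) = th i (g i)" by (simp add: product_rep_def sum_rel_eq_iff)
    moreover have "f i \<in> carrier (A i)" "g i \<in> carrier (A i)" if "i \<in> I" for i
      using f g that by auto
    ultimately have "\<forall>i\<in>I. f i = g i" using inj by (blast dest: inj_onD)
    then show "f = g" using f g by (auto intro: extensionalityI simp: PiE_iff)
  qed
  fix f assume f: "f \<in> carrier ?P"
  then have fi: "\<And>i. i \<in> I \<Longrightarrow> f i \<in> carrier (A i)" by auto
  show "partial_fun (product_rep I th f)"
    unfolding product_rep_def using pf fi by (blast intro: partial_fun_sum_rel)
  show "product_rep I th (ad ?P f) = antidom (base (product_rep I th ` carrier ?P)) (product_rep I th f)"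
    using f ad fi by (simp add: base_product_rep) (simp add: product_rep_def sum_rel_antidom sum_rel_eq_iff)
  fix g assume g: "g \<in> carrier ?P"
  then have gi: "\<And>i. i \<in> I \<Longrightarrow> g i \<in> carrier (A i)" by auto
  show "product_rep I th (comp ?P f g) = product_rep I th f O product_rep I th g"
    using comp fi gi by (simp add: product_rep_def sum_rel_relcomp sum_rel_eq_iff)
  show "product_rep I th (mt ?P f g) = product_rep I th f \<inter> product_rep I th g"
    using mt fi gi by (simp add: product_rep_def sum_rel_Int sum_rel_eq_iff)
qed

text \<open>Completeness transfers because meets in the product are computed componentwise
  and sum_rel commutes with nonempty intersections.\<close>
lemma complete_representation_product:
  assumes rep: "\<forall>i\<in>I. complete_representation (A i) (th i)"
  shows "complete_representation (direct_product I A) (product_rep I th)"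
  unfolding complete_representation_def
proof (intro conjI allI impI)
  show "pf_representation (direct_product I A) (product_rep I th)"
    using rep by (simp add: complete_representation_def pf_representation_product)
  fix S m assume "S \<subseteq> carrier (direct_product I A) \<and> S \<noteq> {} \<and> is_meet (direct_product I A) S m"
  then have S: "S \<subseteq> carrier (direct_product I A)" "S \<noteq> {}" and meet: "is_meet (direct_product I A) S m"
    by auto
  have "th i (m i) = (\<Inter>s\<in>S. th i (s i))" if i: "i \<in> I" for i
  proof -
    have "(\<lambda>s. s i) ` S \<subseteq> carrier (A i)" using S i by auto
    then have "th i (m i) = (\<Inter>t\<in>(\<lambda>s. s i) ` S. th i t)"
      using rep i S(2) is_meet_direct_product_component[OF meet i]
      unfolding complete_representation_def by blast
    then show ?thesis by simp
  qed
  then show "product_rep I th m = (\<Inter>s\<in>S. product_rep I th s)"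
    using S(2) by (simp add: product_rep_def sum_rel_INT sum_rel_eq_iff)
qed

theorem mainTheorem7:
  fixes I :: "'i set" and A :: "'i \<Rightarrow> 'a cwa"
  assumes "\<forall>i\<in>I. is_cwa (A i)"
    and "\<forall>i\<in>I. completely_representable (A i) TYPE('x)"
  shows "is_cwa (direct_product I A)
         \<and> completely_representable (direct_product I A) TYPE('i \<times> 'x)"
proof
  show "is_cwa (direct_product I A)" using assms(1) by (rule direct_product_is_cwa)
  obtain th :: "'i \<Rightarrow> 'a \<Rightarrow> ('x \<times> 'x) set"
    where "\<forall>i\<in>I. complete_representation (A i) (th i)"
    using assms(2) unfolding completely_representable_def by metis
  then have "complete_representation (direct_product I A) (product_rep I th)"
    by (rule complete_representation_product)
  then show "completely_representable (direct_product I A) TYPE('i \<times> 'x)"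
    unfolding completely_representable_def by blast
qed

end
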